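(* Let $D\subseteq\mathbb{R}^n$ be nonempty, convex, closed and bounded, and let $f:\mathbb{R}^n\to\mathbb{R}$ be continuously differentiable. Then in Method (CGMIS) (described in the context), the number of iterations (changes of the index $k$) at each stage $p$ is finite; i.e., for every $p$ the restart condition $\mu(x^k)<\delta_p$ is reached after finitely many iterations.
   Context: Notation: $f'(x)$ is the gradient of $f$; $\mu(x)=\max_{y\in D}\langle f'(x),x-y\rangle$. Method (CGMIS): Choose $w^0\in D$, $\beta\in(0,1)$, and a positive sequence $\{\delta_p\}$ with $\delta_p\to0$. Set $p=1$. (Step 0) Choose a sequence of numbers $\tau_{l,p}\in(0,1)$, $l=0,1,\dots$, with $\tau_{l,p}\to0$ as $l\to\infty$; set $k=0$, $l=0$, $x^0=w^{p-1}$, and choose $\lambda_0\in(0,\tau_{0,p}]$. (Step 1) If $\mu(x^k)<\delta_p$, set $w^p=x^k$, replace $p$ by $p+1$ and go to Step 0 (restart). Otherwise choose any $z^k\in D$ with $\langle f'(x^k),x^k-z^k\rangle\ge\delta_p$. (Step 2) Set $d^k=z^k-x^k$, $x^{k+1}=x^k+\lambda_k d^k$. If $f(x^{k+1})\le f(x^k)+\beta\lambda_k\langle f'(x^k),d^k\rangle$, choose any $\lambda_{k+1}\in[\lambda_k,\tau_{l,p}]$ (with $l$ unchanged). Otherwise set $\lambda'_{k+1}=\min\{\lambda_k,\tau_{l+1,p}\}$, replace $l$ by $l+1$, and choose any $\lambda_{k+1}\in(0,\lambda'_{k+1}]$. Set $k=k+1$ and go to Step 1. The iterations with a fixed value of $p$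 form stage $p$. *)

theory Defs
  imports "HOL-Analysis.Analysis"
begin

text \<open>The gap function mu(x) = max over y in D of the inner product of f'(x) with x - y.
  For compact nonempty D and continuous f' the supremum is attained, i.e. it is the maximum.\<close>
definition gap_mu :: "('a::euclidean_space \<Rightarrow> 'a) \<Rightarrow> 'a set \<Rightarrow> 'a \<Rightarrow> real" where
  "gap_mu f' D x = (SUP y\<in>D. f' x \<bullet> (x - y))"

text \<open>One run of a single stage of method CGMIS with tolerance delta, starting point x0,
  step-size bound sequence tau (tau l = tau_{l,p}); sequences x, z, lam and the counter l
  record x^k, z^k, lambda_k and the value of l at iteration k.\<close>
definition cgmis_stage_run ::
  "('a::euclidean_space \<Rightarrow> real) \<Rightarrow> ('a \<Rightarrow> 'a) \<Rightarrow> 'a set \<Rightarrow> real \<Rightarrow> real \<Rightarrow> (nat \<Rightarrow> real) \<Rightarrow> 'a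
    \<Rightarrow> (nat \<Rightarrow> 'a) \<Rightarrow> (nat \<Rightarrow> 'a) \<Rightarrow> (nat \<Rightarrow> real) \<Rightarrow> (nat \<Rightarrow> nat) \<Rightarrow> bool" where
  "cgmis_stage_run f f' D \<beta> \<delta> \<tau> x0 x z lam l \<longleftrightarrow>
     x 0 = x0 \<and> l 0 = 0 \<and> 0 < lam 0 \<and> lam 0 \<le> \<tau> 0 \<and>
     (\<forall>k. gap_mu f' D (x k) \<ge> \<delta> \<longrightarrow>
        z k \<in> D \<and> f' (x k) \<bullet> (x k - z k) \<ge> \<delta> \<and>
        x (Suc k) = x k + lam k *\<^sub>R (z k - x k) \<and>
        (if f (x (Suc k)) \<le> f (x k) + \<beta> * lam k * (f' (x k) \<bullet> (z k - x k))
         then l (Suc k) = l k \<and> lam k \<le> lam (Suc k) \<and> lam (Suc k) \<le> \<tau> (l k)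
         else l (Suc k) = Suc (l k) \<and> 0 < lam (Suc k) \<and>
              lam (Suc k) \<le> min (lam k) (\<tau> (Suc (l k)))))"

end

theory Submission
  imports Defs
begin

text \<open>If stage p never stopped, every iterate would satisfy the descent test
  f'(x^k) . (x^k - z^k) \<ge> delta, and the iterates would stay in D.
  Uniform continuity of f' on the compact set D makes the Armijo test succeed for all steps
  below some eta > 0, uniformly in x, z \<in> D; since tau_l \<rightarrow> 0, a step of size at most
  tau_l < eta is never rejected, so the counter l stays bounded. Then l is eventually constant,
  from that point on every step passes the Armijo test with nondecreasing step sizes, and f
  decreases by at least beta lambda_K delta per iteration, contradicting the boundedness of f
  on D.\<close>

lemma mean_value_along_ray:
  fixes f :: "'a::real_inner \<Rightarrow> real"
  assumes "0 < t"
    and deriv: "\<And>s. 0 \<le> s \<Longrightarrow> s \<le> t \<Longrightarrow>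
      (f has_derivative (\<lambda>h. f' (x + s *\<^sub>R d) \<bullet> h)) (at (x + s *\<^sub>R d))"
  obtains s where "0 < s" "s < t" "f (x + t *\<^sub>R d) - f x = t * (f' (x + s *\<^sub>R d) \<bullet> d)"
proof -
  have "DERIV (\<lambda>s. f (x + s *\<^sub>R d)) s :> f' (x + s *\<^sub>R d) \<bullet> d"
    if "0 \<le> s" "s \<le> t" for s
  proof -
    have "((\<lambda>s. x + s *\<^sub>R d) has_derivative (\<lambda>h. h *\<^sub>R d)) (at s)"
      by (auto intro!: derivative_eq_intros)
    from has_derivative_compose[OF this deriv[OF that]]
    show ?thesis
      unfolding has_field_derivative_def o_def
      by (rule has_derivative_eq_rhs) (simp add: fun_eq_iff)
  qed
  then have "\<exists>s>0. s < t \<and>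
      f (x + t *\<^sub>R d) - f (x + 0 *\<^sub>R d) = (t - 0) * (f' (x + s *\<^sub>R d) \<bullet> d)"
    by (rule MVT2[OF \<open>0 < t\<close>])
  then show ?thesis
    using that by auto
qed

lemma armijo_condition_uniform:
  fixes f :: "'a::real_inner \<Rightarrow> real"
  assumes "compact D" "convex D"
    and deriv: "\<And>y. y \<in> D \<Longrightarrow> (f has_derivative (\<lambda>h. f' y \<bullet> h)) (at y)"
    and "continuous_on D f'" and "\<beta> < 1" and "0 < \<delta>"
  obtains \<eta> where "0 < \<eta>"
    and "\<And>x z t. x \<in> D \<Longrightarrow> z \<in> D \<Longrightarrow> \<delta> \<le> f' x \<bullet> (x - z) \<Longrightarrow> 0 < t \<Longrightarrow> t \<le> 1 \<Longrightarrow> t < \<eta> \<Longrightarrow>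
      f (x + t *\<^sub>R (z - x)) \<le> f x + \<beta> * t * (f' x \<bullet> (z - x))"
proof -
  obtain B where "0 < B" and B: "\<And>v. v \<in> D \<Longrightarrow> norm v \<le> B"
    using compact_imp_bounded[OF \<open>compact D\<close>] bounded_pos by blast
  define \<epsilon> where "\<epsilon> = (1 - \<beta>) * \<delta> / (2 * B)"
  have "0 < \<epsilon>"
    using \<open>0 < B\<close> \<open>\<beta> < 1\<close> \<open>0 < \<delta>\<close> by (simp add: \<epsilon>_def)
  obtain e where "0 < e"
    and e: "\<And>a b. a \<in> D \<Longrightarrow> b \<in> D \<Longrightarrow> dist a b < e \<Longrightarrow> dist (f' a) (f' b) < \<epsilon>"
    using compact_uniformly_continuous[OF \<open>continuous_on D f'\<close> \<open>compact D\<close>] \<open>0 < \<epsilon>\<close>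
    unfolding uniformly_continuous_on_def by metis
  show thesis
  proof
    show "0 < e / (2 * B)"
      using \<open>0 < e\<close> \<open>0 < B\<close> by simp
  next
    fix x z t
    assume "x \<in> D" "z \<in> D" and descent: "\<delta> \<le> f' x \<bullet> (x - z)"
      and "0 < t" "t \<le> 1" "t < e / (2 * B)"
    define d where "d = z - x"
    have on_segment: "x + s *\<^sub>R d \<in> D" if "0 \<le> s" "s \<le> 1" for s
      using convexD_alt[OF \<open>convex D\<close> \<open>x \<in> D\<close> \<open>z \<in> D\<close> that]
      by (simp add: d_def algebra_simps)
    have "norm d \<le> 2 * B"
      using norm_triangle_ineq4[of z x] B[OF \<open>x \<in> D\<close>] B[OF \<open>z \<in> D\<close>] by (simp add: d_def)
    obtain s where "0 < s" "s < t"
      and mvt: "f (x + t *\<^sub>R d) - f x = t * (f' (x + s *\<^sub>R d) \<bullet> d)"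
      using mean_value_along_ray[OF \<open>0 < t\<close>, of f f' x d] deriv on_segment \<open>t \<le> 1\<close>
      by (metis order.trans)
    define \<xi> where "\<xi> = x + s *\<^sub>R d"
    have "\<xi> \<in> D"
      using on_segment \<open>0 < s\<close> \<open>s < t\<close> \<open>t \<le> 1\<close> by (simp add: \<xi>_def)
    have "dist \<xi> x \<le> t * (2 * B)"
      using \<open>0 < s\<close> \<open>s < t\<close> \<open>norm d \<le> 2 * B\<close>
      by (simp add: \<xi>_def dist_norm mult_mono)
    also have "\<dots> < e"
      using \<open>t < e / (2 * B)\<close> \<open>0 < B\<close> by (simp add: pos_less_divide_eq)
    finally have "norm (f' \<xi> - f' x) \<le> \<epsilon>"
      using e[OF \<open>\<xi> \<in> D\<close> \<open>x \<in> D\<close>] by (simp add: dist_norm)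
    have "(f' \<xi> - f' x) \<bullet> d \<le> norm (f' \<xi> - f' x) * norm d"
      by (rule norm_cauchy_schwarz)
    also have "\<dots> \<le> \<epsilon> * (2 * B)"
      using \<open>norm (f' \<xi> - f' x) \<le> \<epsilon>\<close> \<open>norm d \<le> 2 * B\<close> \<open>0 < \<epsilon>\<close> by (simp add: mult_mono)
    also have "\<dots> = (1 - \<beta>) * \<delta>"
      using \<open>0 < B\<close> by (simp add: \<epsilon>_def)
    also have "\<dots> \<le> (1 - \<beta>) * (f' x \<bullet> (x - z))"
      using descent \<open>\<beta> < 1\<close> by simp
    finally have "f' \<xi> \<bullet> d \<le> \<beta> * (f' x \<bullet> d)"
      by (simp add: d_def inner_diff_left inner_diff_right algebra_simps)
    then have "t * (f' \<xi> \<bullet> d) \<le> \<beta> * t * (f' x \<bullet> d)"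
      using mult_left_mono[of _ _ t] \<open>0 < t\<close> by (simp add: ac_simps)
    with mvt show "f (x + t *\<^sub>R (z - x)) \<le> f x + \<beta> * t * (f' x \<bullet> (z - x))"
      by (simp add: \<xi>_def d_def)
  qed
qed

locale cgmis_nonstopping_stage =
  fixes f :: "'a::euclidean_space \<Rightarrow> real" and f' :: "'a \<Rightarrow> 'a" and D :: "'a set"
    and \<beta> \<delta> :: real and \<tau> :: "nat \<Rightarrow> real" and x0 :: 'a
    and x z :: "nat \<Rightarrow> 'a" and lam :: "nat \<Rightarrow> real" and l :: "nat \<Rightarrow> nat"
  assumes run: "cgmis_stage_run f f' D \<beta> \<delta> \<tau> x0 x z lam l"
    and never_stops: "\<And>k. \<delta> \<le> gap_mu f' D (x k)"
    and convex_D: "convex D" and start_in_D: "x0 \<in> D" and tau_le_1: "\<And>i. \<tau> i \<le> 1"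
begin

lemma step:
  "z k \<in> D" "\<delta> \<le> f' (x k) \<bullet> (x k - z k)" "x (Suc k) = x k + lam k *\<^sub>R (z k - x k)"
  using run never_stops[of k] unfolding cgmis_stage_run_def by blast+

lemma accepted_step:
  assumes "l (Suc k) = l k"
  shows "f (x (Suc k)) \<le> f (x k) + \<beta> * lam k * (f' (x k) \<bullet> (z k - x k))"
    and "lam k \<le> lam (Suc k)"
  using run never_stops[of k] assms unfolding cgmis_stage_run_def by (auto split: if_splits)

lemma rejected_step:
  assumes "l (Suc k) \<noteq> l k"
  shows "l (Suc k) = Suc (l k)"
    and "f (x k) + \<beta> * lam k * (f' (x k) \<bullet> (z k - x k)) < f (x (Suc k))"
  using run never_stops[of k] assms unfolding cgmis_stage_run_def by (auto split: if_splits)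

lemma incseq_counter: "incseq l"
  by (rule incseq_SucI) (metis le_SucI order.refl rejected_step(1))

lemma iterate_and_step_size_bounds: "x k \<in> D \<and> 0 < lam k \<and> lam k \<le> \<tau> (l k)"
proof (induction k)
  case 0
  then show ?case
    using run start_in_D unfolding cgmis_stage_run_def by auto
next
  case (Suc k)
  have "x (Suc k) = (1 - lam k) *\<^sub>R x k + lam k *\<^sub>R z k"
    using step(3)[of k] by (simp add: algebra_simps)
  moreover have "(1 - lam k) *\<^sub>R x k + lam k *\<^sub>R z k \<in> D"
    using Suc tau_le_1[of "l k"] by (intro convexD_alt convex_D step(1)) auto
  moreover have "0 < lam (Suc k) \<and> lam (Suc k) \<le> \<tau> (l (Suc k))"
    using run never_stops[of k] Suc unfolding cgmis_stage_run_def by (auto split: if_splits)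
  ultimately show ?case
    by simp
qed

lemma counter_bounded:
  assumes "compact D"
    and "\<And>y. y \<in> D \<Longrightarrow> (f has_derivative (\<lambda>h. f' y \<bullet> h)) (at y)"
    and "continuous_on D f'" and "\<beta> < 1" and "0 < \<delta>" and "\<tau> \<longlonglongrightarrow> 0"
  obtains L where "\<And>k. l k \<le> L"
proof -
  obtain \<eta> where "0 < \<eta>" and armijo: "\<And>x z t. x \<in> D \<Longrightarrow> z \<in> D \<Longrightarrow> \<delta> \<le> f' x \<bullet> (x - z) \<Longrightarrow>
      0 < t \<Longrightarrow> t \<le> 1 \<Longrightarrow> t < \<eta> \<Longrightarrow> f (x + t *\<^sub>R (z - x)) \<le> f x + \<beta> * t * (f' x \<bullet> (z - x))"
    using armijo_condition_uniform[OF \<open>compact D\<close> convex_D assms(2-5)] by blast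
  obtain L where "\<tau> L < \<eta>"
    using order_tendstoD(2)[OF \<open>\<tau> \<longlonglongrightarrow> 0\<close> \<open>0 < \<eta>\<close>] by (meson eventually_sequentially order_refl)
  \<comment> \<open>A step of size at most tau L < eta is accepted, so the counter cannot move past L.\<close>
  have "l k \<le> L" for k
  proof (induction k)
    case 0
    then show ?case
      using run by (simp add: cgmis_stage_run_def)
  next
    case (Suc k)
    show ?case
    proof (cases "l (Suc k) = l k")
      case False
      have "l k \<noteq> L"
      proof
        assume "l k = L"
        then have "lam k < \<eta>" "0 < lam k" "lam k \<le> 1"
          using iterate_and_step_size_bounds[of k] \<open>\<tau> L < \<eta>\<close> tau_le_1[of L] by auto
        then have "f (x (Suc k)) \<le> f (x k) + \<beta> * lam k * (f' (x k) \<bullet> (z k - x k))"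
          using armijo[of "x k" "z k" "lam k"] step[of k] iterate_and_step_size_bounds[of k] by simp
        then show False
          using rejected_step(2)[OF False] by simp
      qed
      then show ?thesis
        using Suc.IH rejected_step(1)[OF False] by simp
    qed (use Suc.IH in simp)
  qed
  then show thesis
    by (rule that)
qed

lemma counter_unbounded:
  assumes "0 < \<beta>" and "0 < \<delta>" and "bdd_below (f ` D)"
  shows "\<exists>k. L < l k"
proof (rule ccontr)
  assume "\<not> ?thesis"
  then have "range l \<subseteq> {..L}"
    by (auto simp: not_less)
  then have "finite (range l)"
    using finite_subset by blast
  then have "Max (range l) \<in> range l"
    by (intro Max_in) auto
  then obtain K where "l K = Max (range l)"
    by (metis rangeE)
  then have const: "l k = l K" if "K \<le> k" for k
    using \<open>finite (range l)\<close> incseq_counter that by (metis Max_ge antisym incseq_def rangeI)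
  define c where "c = \<beta> * lam K * \<delta>"
  have "0 < c"
    using assms(1,2) iterate_and_step_size_bounds[of K] by (simp add: c_def)
  have descent: "f (x (K + n)) \<le> f (x K) - real n * c \<and> lam K \<le> lam (K + n)" for n
  proof (induction n)
    case (Suc n)
    let ?k = "K + n"
    have "l (Suc ?k) = l ?k"
      using const[of ?k] const[of "Suc ?k"] by simp
    note accepted = accepted_step[OF this]
    have "lam K * \<delta> \<le> lam ?k * (f' (x ?k) \<bullet> (x ?k - z ?k))"
      using Suc.IH step(2)[of ?k] iterate_and_step_size_bounds[of K] assms(2) by (intro mult_mono) auto
    then have "c \<le> \<beta> * lam ?k * (f' (x ?k) \<bullet> (x ?k - z ?k))"
      using mult_left_mono[OF _ less_imp_le[OF assms(1)]] by (simp add: c_def mult.assoc)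
    moreover have "f' (x ?k) \<bullet> (z ?k - x ?k) = - (f' (x ?k) \<bullet> (x ?k - z ?k))"
      by (simp add: inner_diff_right)
    ultimately show ?case
      using accepted Suc.IH by (simp add: algebra_simps)
  qed simp
  obtain m where m: "\<And>k. m \<le> f (x k)"
    using assms(3) iterate_and_step_size_bounds by (meson bdd_below.E imageI)
  obtain n where "f (x K) - m < real n * c"
    using \<open>0 < c\<close> ex_less_of_nat_mult by blast
  then show False
    using descent[of n] m[of "K + n"] by linarith
qed

end

theorem proposition5p1:
  fixes f :: "'a::euclidean_space \<Rightarrow> real" and f' :: "'a \<Rightarrow> 'a" and D :: "'a set"
    and \<beta> \<delta> :: real and \<tau> :: "nat \<Rightarrow> real" and x0 :: 'a
    and x z :: "nat \<Rightarrow> 'a" and lam :: "nat \<Rightarrow> real" and l :: "nat \<Rightarrow> nat"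
  assumes "D \<noteq> {}" and "convex D" and "closed D" and "bounded D"
    and "\<And>y. (f has_derivative (\<lambda>h. f' y \<bullet> h)) (at y)"
    and "continuous_on UNIV f'"
    and "0 < \<beta>" and "\<beta> < 1"
    and "0 < \<delta>"
    and "\<And>i. 0 < \<tau> i \<and> \<tau> i < 1" and "\<tau> \<longlonglongrightarrow> 0"
    and "x0 \<in> D"
    and "cgmis_stage_run f f' D \<beta> \<delta> \<tau> x0 x z lam l"
  shows "\<exists>k. gap_mu f' D (x k) < \<delta>"
proof (rule ccontr)
  assume "\<not> ?thesis"
  then interpret cgmis_nonstopping_stage f f' D \<beta> \<delta> \<tau> x0 x z lam l
    using assms(2,10,12,13) by unfold_locales (auto simp: not_less less_imp_le)
  have "compact D"
    using assms(3,4) compact_eq_bounded_closed by blast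
  have "continuous_on D f"
    using assms(5) by (meson continuous_at_imp_continuous_on has_derivative_continuous)
  then have "bdd_below (f ` D)"
    using \<open>compact D\<close> by (simp add: compact_continuous_image compact_imp_bounded bounded_imp_bdd_below)
  obtain L where "\<And>k. l k \<le> L"
    using counter_bounded[OF \<open>compact D\<close>] assms(5,8,9,11) continuous_on_subset[OF assms(6)] by blast
  moreover obtain k where "L < l k"
    using counter_unbounded assms(7,9) \<open>bdd_below (f ` D)\<close> by blast
  ultimately show False
    by (meson not_le)
qed

end
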